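(* Let $E$ be any subset of the equations $\{(\mathsf e),(\mathsf c),(!\mathsf e),(!\mathsf c),(!\mathsf a1),(!\mathsf a2)\}$ and let $\mathcal V$ be the variety of integral interior $r\ell u$-groupoids satisfying all equations in $E$. Then $\mathcal V$ has the finite embeddability property.
   Context: A unital groupoid is a set with a (not necessarily associative) binary operation $\cdot$ and a two-sided unit $1$. An $r\ell u$-groupoid is an algebra $(A,\wedge,\vee,\cdot,\backslash,/,1)$ such that $(A,\wedge,\vee)$ is a lattice with order $\le$, $(A,\cdot,1)$ is a unital groupoid, and $x\cdot y\le z\iff y\le x\backslash z\iff x\le z/y$. An interior $r\ell u$-groupoid additionally has a unary operation $!$ with $1\le !1$, $!x\cdot !y\le !(x\cdot y)$, $!x\le x$, $!x\le !!x$, and $x\le y\Rightarrow !x\le !y$. It is integral if $x\le 1$ for all $x$. Equations: $(\mathsf e)$ $x\cdot y\le y\cdot x$; $(\mathsf c)$ $x\le x\cdot x$; $(!\mathsf c)$ $!x\le !x\cdot !x$; $(!\mathsf e)$ $!x\cdot y=y\cdot !x$; $(!\mathsf a1)$ $!x\cdot(y\cdot z)=(!x\cdot y)\cdot z$; $(!\mathsf a2)$ $x\cdot(y\cdot !z)=(x\cdot y)\cdot !z$. A partial subalgebra of an algebra $\mathbf C$ is a subset $B$ with $f^{\mathbf B}(\vec b)=f^{\mathbf C}(\vec b)$ if this lies in $B$ and undefined otherwise. An embedding of a partial algebra $\mathbf B$ into an algebra $\mathbf D$ is an injective map $h$ with $h(f^{\mathbf B}(\vec b))=f^{\mathbf D}(h(\vec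 b))$ whenever the left side is defined. A class $\mathcal K$ has the finite embeddability property (FEP) if every finite partial subalgebra of a member of $\mathcal K$ embeds into a finite member of $\mathcal K$. *)

theory Defs
  imports Main
begin

record 'a irlu =
  carrier :: "'a set"
  meet :: "'a \<Rightarrow> 'a \<Rightarrow> 'a"
  join :: "'a \<Rightarrow> 'a \<Rightarrow> 'a"
  mult :: "'a \<Rightarrow> 'a \<Rightarrow> 'a"
  ldiv :: "'a \<Rightarrow> 'a \<Rightarrow> 'a"
  rdiv :: "'a \<Rightarrow> 'a \<Rightarrow> 'a"
  one :: "'a"
  bang :: "'a \<Rightarrow> 'a"

definition leq :: "('a, 'b) irlu_scheme \<Rightarrow> 'a \<Rightarrow> 'a \<Rightarrow> bool" where
  "leq A x y \<longleftrightarrow> meet A x y = x"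

definition closed_ops :: "('a, 'b) irlu_scheme \<Rightarrow> bool" where
  "closed_ops A \<longleftrightarrow> one A \<in> carrier A \<and>
     (\<forall>x\<in>carrier A. bang A x \<in> carrier A) \<and>
     (\<forall>x\<in>carrier A. \<forall>y\<in>carrier A.
        meet A x y \<in> carrier A \<and> join A x y \<in> carrier A \<and> mult A x y \<in> carrier A \<and>
        ldiv A x y \<in> carrier A \<and> rdiv A x y \<in> carrier A)"

definition is_lattice :: "('a, 'b) irlu_scheme \<Rightarrow> bool" where
  "is_lattice A \<longleftrightarrow>
     (\<forall>x\<in>carrier A. \<forall>y\<in>carrier A.
        meet A x y = meet A y x \<and> join A x y = join A y x \<and>
        meet A x (join A x y) = x \<and> join A x (meet A x y) = x) \<and>
     (\<forall>x\<in>carrier A. \<forall>y\<in>carrier A. \<forall>z\<in>carrier A.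
        meet A x (meet A y z) = meet A (meet A x y) z \<and>
        join A x (join A y z) = join A (join A x y) z)"

definition rlu_groupoid :: "('a, 'b) irlu_scheme \<Rightarrow> bool" where
  "rlu_groupoid A \<longleftrightarrow> closed_ops A \<and> is_lattice A \<and>
     (\<forall>x\<in>carrier A. mult A (one A) x = x \<and> mult A x (one A) = x) \<and>
     (\<forall>x\<in>carrier A. \<forall>y\<in>carrier A. \<forall>z\<in>carrier A.
        (leq A (mult A x y) z \<longleftrightarrow> leq A y (ldiv A x z)) \<and>
        (leq A (mult A x y) z \<longleftrightarrow> leq A x (rdiv A z y)))"

definition interior_rlu_groupoid :: "('a, 'b) irlu_scheme \<Rightarrow> bool" where
  "interior_rlu_groupoid A \<longleftrightarrow> rlu_groupoid A \<and>
     leq A (one A) (bang A (one A)) \<and>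
     (\<forall>x\<in>carrier A. \<forall>y\<in>carrier A.
        leq A (mult A (bang A x) (bang A y)) (bang A (mult A x y))) \<and>
     (\<forall>x\<in>carrier A. leq A (bang A x) x \<and> leq A (bang A x) (bang A (bang A x))) \<and>
     (\<forall>x\<in>carrier A. \<forall>y\<in>carrier A. leq A x y \<longrightarrow> leq A (bang A x) (bang A y))"

definition integral :: "('a, 'b) irlu_scheme \<Rightarrow> bool" where
  "integral A \<longleftrightarrow> (\<forall>x\<in>carrier A. leq A x (one A))"

datatype eqn = Eq_e | Eq_c | Eq_bang_e | Eq_bang_c | Eq_bang_a1 | Eq_bang_a2

fun satisfies :: "('a, 'b) irlu_scheme \<Rightarrow> eqn \<Rightarrow> bool" where
  "satisfies A Eq_e = (\<forall>x\<in>carrier A. \<forall>y\<in>carrier A. leq A (mult A x y) (mult A y x))"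
| "satisfies A Eq_c = (\<forall>x\<in>carrier A. leq A x (mult A x x))"
| "satisfies A Eq_bang_c = (\<forall>x\<in>carrier A. leq A (bang A x) (mult A (bang A x) (bang A x)))"
| "satisfies A Eq_bang_e = (\<forall>x\<in>carrier A. \<forall>y\<in>carrier A. mult A (bang A x) y = mult A y (bang A x))"
| "satisfies A Eq_bang_a1 = (\<forall>x\<in>carrier A. \<forall>y\<in>carrier A. \<forall>z\<in>carrier A.
      mult A (bang A x) (mult A y z) = mult A (mult A (bang A x) y) z)"
| "satisfies A Eq_bang_a2 = (\<forall>x\<in>carrier A. \<forall>y\<in>carrier A. \<forall>z\<in>carrier A.
      mult A x (mult A y (bang A z)) = mult A (mult A x y) (bang A z))"

definition in_V :: "eqn set \<Rightarrow> ('a, 'b) irlu_scheme \<Rightarrow> bool" where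
  "in_V E A \<longleftrightarrow> interior_rlu_groupoid A \<and> integral A \<and> (\<forall>e\<in>E. satisfies A e)"

definition partial_embedding ::
  "('a, 'c) irlu_scheme \<Rightarrow> 'a set \<Rightarrow> ('a \<Rightarrow> 'b) \<Rightarrow> ('b, 'd) irlu_scheme \<Rightarrow> bool" where
  "partial_embedding C B h D \<longleftrightarrow> inj_on h B \<and> h ` B \<subseteq> carrier D \<and>
     (one C \<in> B \<longrightarrow> h (one C) = one D) \<and>
     (\<forall>x\<in>B. bang C x \<in> B \<longrightarrow> h (bang C x) = bang D (h x)) \<and>
     (\<forall>x\<in>B. \<forall>y\<in>B.
        (meet C x y \<in> B \<longrightarrow> h (meet C x y) = meet D (h x) (h y)) \<and>
        (join C x y \<in> B \<longrightarrow> h (join C x y) = join D (h x) (h y)) \<and>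
        (mult C x y \<in> B \<longrightarrow> h (mult C x y) = mult D (h x) (h y)) \<and>
        (ldiv C x y \<in> B \<longrightarrow> h (ldiv C x y) = ldiv D (h x) (h y)) \<and>
        (rdiv C x y \<in> B \<longrightarrow> h (rdiv C x y) = rdiv D (h x) (h y)))"

end

theory Submission
  imports Defs "HOL-Library.Ramsey"
begin

text \<open>Following the residuated frame method, the finite algebra is built from words: \<open>W\<close> is the
  set of hole-free terms over the labels \<open>B \<union> {1}\<close>, built with the product and \<open>!\<close>, each denoting
  its value in \<open>C\<close>. The basic sets \<open>{w \<in> W. c[w] \<le> b}\<close>, for \<open>b \<in> B\<close> and contexts \<open>c\<close> with the
  hole under products only, generate a closure operator \<open>\<gamma>\<close>. It is a nucleus for the product of
  sets of words, so the closed sets form an integral interior r\<ell>u-groupoid into which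
  \<open>b \<mapsto> {w. w \<le> b}\<close> embeds the partial subalgebra \<open>B\<close>, and which inherits each of the equations
  (e), (c), (!e), (!c), (!a1), (!a2) from \<open>C\<close>.

  By integrality, deleting subterms of a word or of a context can only increase its value. So
  the basic sets are upward closed for the homeomorphic embedding of terms and grow with the
  context, and Kruskal's tree theorem, proved here by Nash-Williams' minimal bad sequence
  argument, leaves finitely many basic sets for each \<open>b\<close>; closed sets are intersections of basic
  sets.\<close>

section \<open>Kruskal's theorem for finitely labelled terms\<close>

datatype 'a tm = Atom 'a | Hole
  | is_Mul: Mul (mul_left: "'a tm") (mul_right: "'a tm")
  | is_Bang: Bang (bang_arg: "'a tm")

inductive emb :: "'a tm \<Rightarrow> 'a tm \<Rightarrow> bool" where
  emb_Atom: "emb (Atom a) (Atom a)"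
| emb_Hole: "emb Hole Hole"
| emb_Mul_left: "emb s t1 \<Longrightarrow> emb s (Mul t1 t2)"
| emb_Mul_right: "emb s t2 \<Longrightarrow> emb s (Mul t1 t2)"
| emb_Bang_arg: "emb s t \<Longrightarrow> emb s (Bang t)"
| emb_Mul: "emb s1 t1 \<Longrightarrow> emb s2 t2 \<Longrightarrow> emb (Mul s1 s2) (Mul t1 t2)"
| emb_Bang: "emb s t \<Longrightarrow> emb (Bang s) (Bang t)"

lemma emb_refl: "emb t t"
  by (induction t) (auto intro: emb.intros)

fun atoms :: "'a tm \<Rightarrow> 'a set" where
  "atoms (Atom a) = {a}"
| "atoms Hole = {}"
| "atoms (Mul s t) = atoms s \<union> atoms t"
| "atoms (Bang s) = atoms s"

lemma emb_atoms: "emb s t \<Longrightarrow> atoms s \<subseteq> atoms t"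
  by (induction rule: emb.induct) auto

definition good :: "(nat \<Rightarrow> 'a tm) \<Rightarrow> bool" where
  "good f \<longleftrightarrow> (\<exists>i j. i < j \<and> emb (f i) (f j))"

lemma ramsey_subseq:
  fixes x :: "nat \<Rightarrow> 'b"
  obtains \<phi> :: "nat \<Rightarrow> nat" where "strict_mono \<phi>"
    and "(\<forall>i j. i < j \<longrightarrow> P (x (\<phi> i)) (x (\<phi> j))) \<or> (\<forall>i j. i < j \<longrightarrow> \<not> P (x (\<phi> i)) (x (\<phi> j)))"
proof -
  define col where "col X = (if P (x (Min X)) (x (Max X)) then 0 else 1::nat)" for X :: "nat set"
  have "\<forall>a\<in>UNIV. \<forall>b\<in>UNIV. a \<noteq> b \<longrightarrow> col {a, b} < 2" by (simp add: col_def)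
  from Ramsey2[OF infinite_UNIV_nat this] obtain Y t
    where "infinite Y" and hom: "\<forall>a\<in>Y. \<forall>b\<in>Y. a \<noteq> b \<longrightarrow> col {a, b} = t"
    by blast
  then obtain \<phi> :: "nat \<Rightarrow> nat" where \<phi>: "strict_mono \<phi>" "\<And>n. \<phi> n \<in> Y"
    using infinite_enumerate by blast
  have "P (x (\<phi> i)) (x (\<phi> j)) \<longleftrightarrow> t = 0" if "i < j" for i j
  proof -
    have "\<phi> i < \<phi> j" using \<phi>(1) that by (rule strict_monoD)
    then have "col {\<phi> i, \<phi> j} = t" and "Min {\<phi> i, \<phi> j} = \<phi> i" and "Max {\<phi> i, \<phi> j} = \<phi> j"
      using hom \<phi>(2) by auto
    then show ?thesis unfolding col_def by (auto split: if_splits)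
  qed
  then show thesis using that[OF \<phi>(1)] by blast
qed

lemma chain_subseq:
  fixes x :: "nat \<Rightarrow> 'b"
  assumes "\<And>\<psi> :: nat \<Rightarrow> nat. strict_mono \<psi> \<Longrightarrow> \<exists>i j. i < j \<and> R (x (\<psi> i)) (x (\<psi> j))"
  obtains \<phi> :: "nat \<Rightarrow> nat" where "strict_mono \<phi>" "\<And>i j. i < j \<Longrightarrow> R (x (\<phi> i)) (x (\<phi> j))"
proof -
  obtain \<phi> :: "nat \<Rightarrow> nat" where \<phi>: "strict_mono \<phi>"
    and "(\<forall>i j. i < j \<longrightarrow> R (x (\<phi> i)) (x (\<phi> j))) \<or> (\<forall>i j. i < j \<longrightarrow> \<not> R (x (\<phi> i)) (x (\<phi> j)))"
    by (rule ramsey_subseq)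
  moreover have "\<exists>i j. i < j \<and> R (x (\<phi> i)) (x (\<phi> j))" using assms[OF \<phi>] .
  ultimately show thesis using that by blast
qed

context
  fixes L :: "'a set"
  assumes finite_L: "finite L"
begin

definition bad :: "(nat \<Rightarrow> 'a tm) \<Rightarrow> bool" where
  "bad f \<longleftrightarrow> (\<forall>i. atoms (f i) \<subseteq> L) \<and> \<not> good f"

text \<open>Nash-Williams' minimal bad sequence: \<open>mbs n\<close> is a term of least size that continues
  \<open>mbs 0, \<dots>, mbs (n - 1)\<close> to a bad sequence.\<close>

definition bad_extension :: "'a tm list \<Rightarrow> 'a tm \<Rightarrow> bool" where
  "bad_extension xs t \<longleftrightarrow> (\<exists>g. bad g \<and> (\<forall>i<length xs. g i = xs ! i) \<and> g (length xs) = t)"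

definition min_extension :: "'a tm list \<Rightarrow> 'a tm" where
  "min_extension xs =
     (SOME t. bad_extension xs t \<and> (\<forall>t'. bad_extension xs t' \<longrightarrow> size t \<le> size t'))"

primrec mbs_prefix :: "nat \<Rightarrow> 'a tm list" where
  "mbs_prefix 0 = []"
| "mbs_prefix (Suc n) = mbs_prefix n @ [min_extension (mbs_prefix n)]"

definition mbs :: "nat \<Rightarrow> 'a tm" where
  "mbs n = min_extension (mbs_prefix n)"

lemma length_mbs_prefix [simp]: "length (mbs_prefix n) = n"
  by (induction n) auto

lemma nth_mbs_prefix: "i < n \<Longrightarrow> mbs_prefix n ! i = mbs i"
  by (induction n) (auto simp: nth_append less_Suc_eq mbs_def)

lemma min_extension:
  assumes "bad_extension xs t"
  shows "bad_extension xs (min_extension xs)"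
    and "bad_extension xs t' \<Longrightarrow> size (min_extension xs) \<le> size t'"
proof -
  have "\<exists>t. bad_extension xs t \<and> (\<forall>t'. bad_extension xs t' \<longrightarrow> size t \<le> size t')"
    using ex_has_least_nat[of "bad_extension xs" t size] assms by blast
  then have "bad_extension xs (min_extension xs) \<and>
      (\<forall>t'. bad_extension xs t' \<longrightarrow> size (min_extension xs) \<le> size t')"
    unfolding min_extension_def by (rule someI_ex)
  then show "bad_extension xs (min_extension xs)"
    and "bad_extension xs t' \<Longrightarrow> size (min_extension xs) \<le> size t'" by blast+
qed

lemma bad_extension_mbs:
  assumes "bad f"
  shows "bad_extension (mbs_prefix n) (mbs n)"
proof (induction n)
  case 0
  show ?case using min_extension(1)[of "[]" "f 0"] assms
    unfolding mbs_def bad_extension_def by auto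
next
  case (Suc n)
  then obtain g where g: "bad g" "\<forall>i<n. g i = mbs_prefix n ! i" "g n = mbs n"
    unfolding bad_extension_def by auto
  then have "bad_extension (mbs_prefix (Suc n)) (g (Suc n))"
    unfolding bad_extension_def by (auto simp: nth_append less_Suc_eq mbs_def)
  then show ?case unfolding mbs_def by (rule min_extension(1))
qed

lemma mbs_atoms:
  assumes "bad f"
  shows "atoms (mbs k) \<subseteq> L"
proof -
  obtain g where "bad g" "g k = mbs k"
    using bad_extension_mbs[OF assms, of k] unfolding bad_extension_def by auto
  then show ?thesis unfolding bad_def by metis
qed

lemma mbs_not_emb:
  assumes "bad f" "i < j"
  shows "\<not> emb (mbs i) (mbs j)"
proof
  assume "emb (mbs i) (mbs j)"
  moreover obtain g where "bad g" "\<forall>k<j. g k = mbs_prefix j ! k" "g j = mbs j"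
    using bad_extension_mbs[OF assms(1), of j] unfolding bad_extension_def by auto
  ultimately show False using assms(2) nth_mbs_prefix unfolding bad_def good_def by metis
qed

lemma mbs_minimal:
  assumes "bad f" "bad g" "\<forall>i<n. g i = mbs i"
  shows "size (mbs n) \<le> size (g n)"
proof -
  have "bad_extension (mbs_prefix n) (g n)"
    unfolding bad_extension_def using assms(2,3) nth_mbs_prefix by auto
  then show ?thesis
    unfolding mbs_def by (rule min_extension(2)[OF bad_extension_mbs[OF assms(1), unfolded mbs_def]])
qed

lemma good_below_mbs:
  assumes f: "bad f" and \<phi>: "strict_mono \<phi>"
    and c: "\<And>k. atoms (c k) \<subseteq> L" "\<And>k. size (c k) < size (mbs (\<phi> k))"
      "\<And>k s. emb s (c k) \<Longrightarrow> emb s (mbs (\<phi> k))"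
  shows "good c"
proof (rule ccontr)
  assume c_bad: "\<not> good c"
  note mbs = mbs_atoms[OF f] mbs_not_emb[OF f]
  define g where "g i = (if i < \<phi> 0 then mbs i else c (i - \<phi> 0))" for i
  have "\<not> emb (g i) (g j)" if "i < j" for i j
  proof (cases "j < \<phi> 0")
    case True
    then show ?thesis using that mbs(2) unfolding g_def by simp
  next
    case j: False
    show ?thesis
    proof (cases "i < \<phi> 0")
      case True
      have "i < \<phi> (j - \<phi> 0)"
        using True strict_mono_less_eq[OF \<phi>, of 0 "j - \<phi> 0"] by linarith
      then have "\<not> emb (mbs i) (mbs (\<phi> (j - \<phi> 0)))" by (rule mbs(2))
      then show ?thesis using True j c(3) unfolding g_def by auto
    next
      case False
      then have "i - \<phi> 0 < j - \<phi> 0" using that by linarith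
      then have "\<not> emb (c (i - \<phi> 0)) (c (j - \<phi> 0))" using c_bad unfolding good_def by blast
      then show ?thesis using False j unfolding g_def by simp
    qed
  qed
  moreover have "atoms (g i) \<subseteq> L" for i using c(1) mbs(1) unfolding g_def by simp
  ultimately have "bad g" unfolding bad_def good_def by blast
  then have "size (mbs (\<phi> 0)) \<le> size (g (\<phi> 0))"
    by (rule mbs_minimal[OF f]) (simp add: g_def)
  then show False using c(2)[of 0] unfolding g_def by simp
qed

lemma mbs_compound_subseq:
  assumes f: "bad f"
  obtains \<phi> :: "nat \<Rightarrow> nat" where "strict_mono \<phi>" "\<And>k. is_Mul (mbs (\<phi> k))"
  | \<phi> :: "nat \<Rightarrow> nat" where "strict_mono \<phi>" "\<And>k. is_Bang (mbs (\<phi> k))"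
proof -
  have "inj mbs"
  proof (rule injI)
    fix i j assume "mbs i = mbs j"
    then show "i = j" using mbs_not_emb[OF f] emb_refl[of "mbs i"] by (metis linorder_neqE_nat)
  qed
  then have "finite (mbs -` insert Hole (Atom ` L))"
    using finite_L by (simp add: finite_vimageI)
  then have "infinite (- (mbs -` insert Hole (Atom ` L)))" by simp
  moreover have "- (mbs -` insert Hole (Atom ` L)) \<subseteq> {k. is_Mul (mbs k)} \<union> {k. is_Bang (mbs k)}"
  proof
    fix k assume "k \<in> - (mbs -` insert Hole (Atom ` L))"
    with mbs_atoms[OF f, of k] show "k \<in> {k. is_Mul (mbs k)} \<union> {k. is_Bang (mbs k)}"
      by (cases "mbs k") auto
  qed
  ultimately have "infinite ({k. is_Mul (mbs k)} \<union> {k. is_Bang (mbs k)})"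
    using finite_subset by blast
  then consider "infinite {k. is_Mul (mbs k)}" | "infinite {k. is_Bang (mbs k)}" by blast
  then show thesis
  proof cases
    case 1
    then obtain \<phi> :: "nat \<Rightarrow> nat" where "strict_mono \<phi>" "\<forall>k. \<phi> k \<in> {k. is_Mul (mbs k)}"
      using infinite_enumerate by blast
    then show thesis using that(1) by blast
  next
    case 2
    then obtain \<phi> :: "nat \<Rightarrow> nat" where "strict_mono \<phi>" "\<forall>k. \<phi> k \<in> {k. is_Bang (mbs k)}"
      using infinite_enumerate by blast
    then show thesis using that(2) by blast
  qed
qed

text \<open>Children of the minimal bad sequence form good sequences; on a subsequence where the
  left children form an \<open>emb\<close>-chain, a good pair of right children yields a good pair of products.\<close>

lemma mbs_no_Mul_subseq:
  fixes \<phi> :: "nat \<Rightarrow> nat"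
  assumes f: "bad f" and \<phi>: "strict_mono \<phi>" and Mul: "\<And>k. is_Mul (mbs (\<phi> k))"
  shows False
proof -
  define l r where "l k = mul_left (mbs (\<phi> k))" and "r k = mul_right (mbs (\<phi> k))" for k
  have mbs_\<phi>: "mbs (\<phi> k) = Mul (l k) (r k)" for k using Mul unfolding l_def r_def by simp
  have lr_atoms: "atoms (l k) \<subseteq> L" "atoms (r k) \<subseteq> L" for k
    using mbs_atoms[OF f, of "\<phi> k"] by (simp_all add: mbs_\<phi>)
  have good_sub: "good (\<lambda>k. l (\<psi> k))" "good (\<lambda>k. r (\<psi> k))" if \<psi>: "strict_mono \<psi>" for \<psi>
  proof -
    have "strict_mono (\<lambda>k. \<phi> (\<psi> k))" using \<phi> \<psi> by (simp add: strict_mono_def)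
    note below = good_below_mbs[OF f this]
    show "good (\<lambda>k. l (\<psi> k))"
      by (rule below) (simp_all add: lr_atoms mbs_\<phi> emb_Mul_left)
    show "good (\<lambda>k. r (\<psi> k))"
      by (rule below) (simp_all add: lr_atoms mbs_\<phi> emb_Mul_right)
  qed
  have l_good: "\<exists>i j. i < j \<and> emb (l (\<psi> i)) (l (\<psi> j))" if "strict_mono \<psi>" for \<psi> :: "nat \<Rightarrow> nat"
    using good_sub(1)[OF that] unfolding good_def .
  obtain \<psi> :: "nat \<Rightarrow> nat" where \<psi>: "strict_mono \<psi>" "\<And>i j. i < j \<Longrightarrow> emb (l (\<psi> i)) (l (\<psi> j))"
    using chain_subseq[where x = l and R = emb, OF l_good] by blast
  obtain i j where ij: "i < j" "emb (r (\<psi> i)) (r (\<psi> j))"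
    using good_sub(2)[OF \<psi>(1)] unfolding good_def by blast
  have "emb (mbs (\<phi> (\<psi> i))) (mbs (\<phi> (\<psi> j)))"
    unfolding mbs_\<phi> using \<psi>(2)[OF ij(1)] ij(2) by (rule emb_Mul)
  moreover have "\<phi> (\<psi> i) < \<phi> (\<psi> j)"
    using ij(1) \<phi> \<psi>(1) by (simp add: strict_mono_def)
  ultimately show False using mbs_not_emb[OF f] by blast
qed

lemma mbs_no_Bang_subseq:
  fixes \<phi> :: "nat \<Rightarrow> nat"
  assumes f: "bad f" and \<phi>: "strict_mono \<phi>" and Bang: "\<And>k. is_Bang (mbs (\<phi> k))"
  shows False
proof -
  define a where "a k = bang_arg (mbs (\<phi> k))" for k
  have mbs_\<phi>: "mbs (\<phi> k) = Bang (a k)" for k using Bang unfolding a_def by simp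
  have a_atoms: "atoms (a k) \<subseteq> L" for k using mbs_atoms[OF f, of "\<phi> k"] by (simp add: mbs_\<phi>)
  have "good a"
    by (rule good_below_mbs[OF f \<phi>]) (simp_all add: a_atoms mbs_\<phi> emb_Bang_arg)
  then obtain i j where "i < j" "emb (a i) (a j)" unfolding good_def by blast
  then have "emb (mbs (\<phi> i)) (mbs (\<phi> j))" unfolding mbs_\<phi> by (blast intro: emb_Bang)
  moreover have "\<phi> i < \<phi> j" using \<phi> \<open>i < j\<close> by (rule strict_monoD)
  ultimately show False using mbs_not_emb[OF f] by blast
qed

theorem kruskal: "(\<And>i. atoms (f i) \<subseteq> L) \<Longrightarrow> good f"
proof (rule ccontr)
  assume "\<And>i. atoms (f i) \<subseteq> L" "\<not> good f"
  then have f: "bad f" unfolding bad_def by blast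
  show False
    by (cases rule: mbs_compound_subseq[OF f]) (use mbs_no_Mul_subseq mbs_no_Bang_subseq f in blast)+
qed

corollary upset_chain_stabilises:
  assumes S: "\<And>t. t \<in> S \<Longrightarrow> atoms t \<subseteq> L"
    and U: "\<And>k. U k \<subseteq> S" "\<And>k. U k \<subseteq> U (Suc k)"
    and up: "\<And>k s t. s \<in> U k \<Longrightarrow> emb s t \<Longrightarrow> t \<in> S \<Longrightarrow> t \<in> U k"
  shows "\<exists>k. U (Suc k) = U k"
proof (rule ccontr)
  assume "\<nexists>k. U (Suc k) = U k"
  then have "\<forall>k. \<exists>u. u \<in> U (Suc k) - U k" using U(2) by blast
  then obtain u where u: "\<And>k. u k \<in> U (Suc k) - U k" by metis
  have "good u" using u U(1) S by (intro kruskal) blast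
  then obtain i j where ij: "i < j" "emb (u i) (u j)" unfolding good_def by blast
  have "U (Suc i) \<subseteq> U j" using lift_Suc_mono_le[of U, OF U(2)] ij(1) by simp
  then have "u j \<in> U j" using up[OF _ ij(2)] u U(1) by blast
  then show False using u by blast
qed

end

section \<open>Integral interior r\<ell>u-groupoids\<close>

locale integral_interior_rlu =
  fixes C :: "('a, 'b) irlu_scheme"
  assumes interior: "interior_rlu_groupoid C" and integral: "integral C"
begin

abbreviation "A \<equiv> carrier C"
abbreviation le (infix "\<sqsubseteq>" 50) where "x \<sqsubseteq> y \<equiv> leq C x y"

lemma rlu: "rlu_groupoid C" using interior unfolding interior_rlu_groupoid_def by blast
lemma lattice: "is_lattice C" using rlu unfolding rlu_groupoid_def by blast

lemma one_closed [simp]: "one C \<in> A"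
  and bang_closed [simp]: "x \<in> A \<Longrightarrow> bang C x \<in> A"
  and ops_closed [simp]: "x \<in> A \<Longrightarrow> y \<in> A \<Longrightarrow> meet C x y \<in> A"
  "x \<in> A \<Longrightarrow> y \<in> A \<Longrightarrow> join C x y \<in> A" "x \<in> A \<Longrightarrow> y \<in> A \<Longrightarrow> mult C x y \<in> A"
  "x \<in> A \<Longrightarrow> y \<in> A \<Longrightarrow> ldiv C x y \<in> A" "x \<in> A \<Longrightarrow> y \<in> A \<Longrightarrow> rdiv C x y \<in> A"
  using rlu unfolding rlu_groupoid_def closed_ops_def by blast+

lemma meet_comm: "x \<in> A \<Longrightarrow> y \<in> A \<Longrightarrow> meet C x y = meet C y x"
  and join_comm: "x \<in> A \<Longrightarrow> y \<in> A \<Longrightarrow> join C x y = join C y x"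
  and meet_join_absorb: "x \<in> A \<Longrightarrow> y \<in> A \<Longrightarrow> meet C x (join C x y) = x"
  and join_meet_absorb: "x \<in> A \<Longrightarrow> y \<in> A \<Longrightarrow> join C x (meet C x y) = x"
  and meet_assoc: "x \<in> A \<Longrightarrow> y \<in> A \<Longrightarrow> z \<in> A \<Longrightarrow> meet C x (meet C y z) = meet C (meet C x y) z"
  and join_assoc: "x \<in> A \<Longrightarrow> y \<in> A \<Longrightarrow> z \<in> A \<Longrightarrow> join C x (join C y z) = join C (join C x y) z"
  using lattice unfolding is_lattice_def by blast+

lemma le_refl [simp]: "x \<in> A \<Longrightarrow> x \<sqsubseteq> x"
  unfolding leq_def by (metis meet_join_absorb join_meet_absorb ops_closed(1))

lemma le_trans: "x \<in> A \<Longrightarrow> y \<in> A \<Longrightarrow> z \<in> A \<Longrightarrow> x \<sqsubseteq> y \<Longrightarrow> y \<sqsubseteq> z \<Longrightarrow> x \<sqsubseteq> z"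
  unfolding leq_def by (metis meet_assoc)

lemma le_antisym: "x \<in> A \<Longrightarrow> y \<in> A \<Longrightarrow> x \<sqsubseteq> y \<Longrightarrow> y \<sqsubseteq> x \<Longrightarrow> x = y"
  unfolding leq_def by (metis meet_comm)

lemma join_upper1: "x \<in> A \<Longrightarrow> y \<in> A \<Longrightarrow> x \<sqsubseteq> join C x y"
  unfolding leq_def by (simp add: meet_join_absorb)

lemma join_upper2: "x \<in> A \<Longrightarrow> y \<in> A \<Longrightarrow> y \<sqsubseteq> join C x y"
  using join_upper1 join_comm by metis

lemma join_least: "x \<in> A \<Longrightarrow> y \<in> A \<Longrightarrow> z \<in> A \<Longrightarrow> x \<sqsubseteq> z \<Longrightarrow> y \<sqsubseteq> z \<Longrightarrow> join C x y \<sqsubseteq> z"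
  unfolding leq_def
  by (metis join_assoc join_comm join_meet_absorb meet_comm meet_join_absorb ops_closed(2))

lemma meet_lower1: "x \<in> A \<Longrightarrow> y \<in> A \<Longrightarrow> meet C x y \<sqsubseteq> x"
  unfolding leq_def by (metis meet_assoc meet_comm le_refl leq_def)

lemma meet_lower2: "x \<in> A \<Longrightarrow> y \<in> A \<Longrightarrow> meet C x y \<sqsubseteq> y"
  using meet_lower1 meet_comm by metis

lemma meet_greatest: "x \<in> A \<Longrightarrow> y \<in> A \<Longrightarrow> z \<in> A \<Longrightarrow> z \<sqsubseteq> x \<Longrightarrow> z \<sqsubseteq> y \<Longrightarrow> z \<sqsubseteq> meet C x y"
  unfolding leq_def by (metis meet_assoc)

lemma mult_one_left [simp]: "x \<in> A \<Longrightarrow> mult C (one C) x = x"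
  and mult_one_right [simp]: "x \<in> A \<Longrightarrow> mult C x (one C) = x"
  using rlu unfolding rlu_groupoid_def by blast+

lemma residuation_left: "x \<in> A \<Longrightarrow> y \<in> A \<Longrightarrow> z \<in> A \<Longrightarrow> mult C x y \<sqsubseteq> z \<longleftrightarrow> y \<sqsubseteq> ldiv C x z"
  and residuation_right: "x \<in> A \<Longrightarrow> y \<in> A \<Longrightarrow> z \<in> A \<Longrightarrow> mult C x y \<sqsubseteq> z \<longleftrightarrow> x \<sqsubseteq> rdiv C z y"
  using rlu unfolding rlu_groupoid_def by blast+

lemma mult_mono_right: "x \<in> A \<Longrightarrow> y \<in> A \<Longrightarrow> y' \<in> A \<Longrightarrow> y \<sqsubseteq> y' \<Longrightarrow> mult C x y \<sqsubseteq> mult C x y'"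
  by (metis ops_closed(3,4) le_refl le_trans residuation_left)

lemma mult_mono_left: "x \<in> A \<Longrightarrow> x' \<in> A \<Longrightarrow> y \<in> A \<Longrightarrow> x \<sqsubseteq> x' \<Longrightarrow> mult C x y \<sqsubseteq> mult C x' y"
  by (metis ops_closed(3,5) le_refl le_trans residuation_right)

lemma mult_mono:
  "x \<in> A \<Longrightarrow> x' \<in> A \<Longrightarrow> y \<in> A \<Longrightarrow> y' \<in> A \<Longrightarrow> x \<sqsubseteq> x' \<Longrightarrow> y \<sqsubseteq> y' \<Longrightarrow> mult C x y \<sqsubseteq> mult C x' y'"
  by (meson ops_closed(3) le_trans mult_mono_left mult_mono_right)

lemma le_one: "x \<in> A \<Longrightarrow> x \<sqsubseteq> one C"
  using integral unfolding integral_def by blast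

lemma mult_le_left: "x \<in> A \<Longrightarrow> y \<in> A \<Longrightarrow> mult C x y \<sqsubseteq> x"
  by (metis one_closed le_one mult_mono_right mult_one_right)

lemma mult_le_right: "x \<in> A \<Longrightarrow> y \<in> A \<Longrightarrow> mult C x y \<sqsubseteq> y"
  by (metis one_closed le_one mult_mono_left mult_one_left)

lemma one_le_bang_one: "one C \<sqsubseteq> bang C (one C)"
  and bang_mult: "x \<in> A \<Longrightarrow> y \<in> A \<Longrightarrow> mult C (bang C x) (bang C y) \<sqsubseteq> bang C (mult C x y)"
  and bang_le: "x \<in> A \<Longrightarrow> bang C x \<sqsubseteq> x"
  and bang_le_bang_bang: "x \<in> A \<Longrightarrow> bang C x \<sqsubseteq> bang C (bang C x)"
  and bang_mono: "x \<in> A \<Longrightarrow> y \<in> A \<Longrightarrow> x \<sqsubseteq> y \<Longrightarrow> bang C x \<sqsubseteq> bang C y"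
  using interior unfolding interior_rlu_groupoid_def by blast+

end

section \<open>The residuated frame of a finite partial subalgebra\<close>

fun ground :: "'a tm \<Rightarrow> bool" where
  "ground (Atom a) = True"
| "ground Hole = False"
| "ground (Mul s t) = (ground s \<and> ground t)"
| "ground (Bang s) = ground s"

fun eval :: "('a, 'b) irlu_scheme \<Rightarrow> 'a \<Rightarrow> 'a tm \<Rightarrow> 'a" where
  "eval C v (Atom a) = a"
| "eval C v Hole = v"
| "eval C v (Mul s t) = mult C (eval C v s) (eval C v t)"
| "eval C v (Bang s) = bang C (eval C v s)"

fun fill :: "'a tm \<Rightarrow> 'a tm \<Rightarrow> 'a tm" where
  "fill (Atom a) s = Atom a"
| "fill Hole s = s"
| "fill (Mul c d) s = Mul (fill c s) (fill d s)"
| "fill (Bang c) s = Bang (fill c s)"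

lemma eval_ground: "ground t \<Longrightarrow> eval C v t = eval C v' t"
  by (induction t) auto

lemma fill_ground: "ground t \<Longrightarrow> fill t s = t"
  by (induction t) auto

lemma eval_fill: "eval C v (fill c s) = eval C (eval C v s) c"
  by (induction c) auto

context integral_interior_rlu
begin

lemma eval_closed: "v \<in> A \<Longrightarrow> atoms t \<subseteq> A \<Longrightarrow> eval C v t \<in> A"
  by (induction t) auto

lemma eval_emb:
  assumes "emb s t" "atoms t \<subseteq> A" "v \<in> A"
  shows "eval C v t \<sqsubseteq> eval C v s"
  using assms
proof (induction rule: emb.induct)
  case (emb_Mul_left s t1 t2)
  have "eval C v t1 \<in> A" "eval C v t2 \<in> A" "eval C v s \<in> A"
    using emb_Mul_left eval_closed emb_atoms[OF emb_Mul_left(1)] by auto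
  moreover have "eval C v t1 \<sqsubseteq> eval C v s" using emb_Mul_left by simp
  ultimately show ?case by (simp add: le_trans[OF _ _ _ mult_le_left])
next
  case (emb_Mul_right s t2 t1)
  have "eval C v t1 \<in> A" "eval C v t2 \<in> A" "eval C v s \<in> A"
    using emb_Mul_right eval_closed emb_atoms[OF emb_Mul_right(1)] by auto
  moreover have "eval C v t2 \<sqsubseteq> eval C v s" using emb_Mul_right by simp
  ultimately show ?case by (simp add: le_trans[OF _ _ _ mult_le_right])
next
  case (emb_Bang_arg s t)
  have "eval C v t \<in> A" "eval C v s \<in> A"
    using emb_Bang_arg eval_closed emb_atoms[OF emb_Bang_arg(1)] by auto
  moreover have "eval C v t \<sqsubseteq> eval C v s" using emb_Bang_arg by simp
  ultimately show ?case by (simp add: le_trans[OF _ _ _ bang_le])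
next
  case (emb_Mul s1 t1 s2 t2)
  have "eval C v t1 \<in> A" "eval C v t2 \<in> A" "eval C v s1 \<in> A" "eval C v s2 \<in> A"
    using emb_Mul eval_closed emb_atoms[OF emb_Mul(1)] emb_atoms[OF emb_Mul(2)] by auto
  then show ?case using emb_Mul by (simp add: mult_mono)
next
  case (emb_Bang s t)
  have "eval C v t \<in> A" "eval C v s \<in> A"
    using emb_Bang eval_closed emb_atoms[OF emb_Bang(1)] by auto
  then show ?case using emb_Bang by (simp add: bang_mono)
qed simp_all

end

locale fep_frame = integral_interior_rlu C for C :: "('a, 'b) irlu_scheme" +
  fixes B :: "'a set"
  assumes B_carrier: "B \<subseteq> carrier C" and finite_B: "finite B"
begin

definition Lab :: "'a set" where
  "Lab = insert (one C) B"

definition W :: "'a tm set" where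
  "W = {t. ground t \<and> atoms t \<subseteq> Lab}"

definition val :: "'a tm \<Rightarrow> 'a" where
  "val t = eval C (one C) t"

text \<open>No \<open>Bang\<close> lies above the hole of a context, so evaluation along a context is residuated.\<close>

inductive_set Ctx :: "'a tm set" where
  Ctx_Hole: "Hole \<in> Ctx"
| Ctx_Mul_left: "c \<in> Ctx \<Longrightarrow> t \<in> W \<Longrightarrow> Mul c t \<in> Ctx"
| Ctx_Mul_right: "c \<in> Ctx \<Longrightarrow> t \<in> W \<Longrightarrow> Mul t c \<in> Ctx"

lemma finite_Lab: "finite Lab"
  unfolding Lab_def using finite_B by simp

lemma Lab_carrier: "Lab \<subseteq> A"
  unfolding Lab_def using B_carrier by simp

lemma one_W: "Atom (one C) \<in> W"
  and W_Mul [simp]: "Mul s t \<in> W \<longleftrightarrow> s \<in> W \<and> t \<in> W"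
  and W_Bang [simp]: "Bang s \<in> W \<longleftrightarrow> s \<in> W"
  unfolding W_def Lab_def by auto

lemma val_Atom [simp]: "val (Atom a) = a"
  and val_Mul [simp]: "val (Mul s t) = mult C (val s) (val t)"
  and val_Bang [simp]: "val (Bang s) = bang C (val s)"
  unfolding val_def by simp_all

lemma W_atoms: "t \<in> W \<Longrightarrow> atoms t \<subseteq> A"
  unfolding W_def using Lab_carrier by blast

lemma Ctx_Lab: "c \<in> Ctx \<Longrightarrow> atoms c \<subseteq> Lab"
  by (induction rule: Ctx.induct) (auto simp: W_def)

lemma Ctx_atoms: "c \<in> Ctx \<Longrightarrow> atoms c \<subseteq> A"
  using Ctx_Lab Lab_carrier by blast

lemma val_closed [simp]: "t \<in> W \<Longrightarrow> val t \<in> A"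
  unfolding val_def by (simp add: eval_closed W_atoms)

lemma eval_W: "t \<in> W \<Longrightarrow> eval C v t = val t"
  unfolding val_def W_def by (auto intro: eval_ground)

lemma eval_Ctx_closed [simp]: "c \<in> Ctx \<Longrightarrow> v \<in> A \<Longrightarrow> eval C v c \<in> A"
  by (simp add: eval_closed Ctx_atoms)

lemma eval_Ctx_mono:
  "c \<in> Ctx \<Longrightarrow> v \<in> A \<Longrightarrow> v' \<in> A \<Longrightarrow> v \<sqsubseteq> v' \<Longrightarrow> eval C v c \<sqsubseteq> eval C v' c"
  by (induction rule: Ctx.induct) (auto simp: eval_W intro!: mult_mono_left mult_mono_right)

lemma eval_Ctx_join:
  "c \<in> Ctx \<Longrightarrow> v \<in> A \<Longrightarrow> v' \<in> A \<Longrightarrow> b \<in> A \<Longrightarrow> eval C v c \<sqsubseteq> b \<Longrightarrow> eval C v' c \<sqsubseteq> b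
    \<Longrightarrow> eval C (join C v v') c \<sqsubseteq> b"
proof (induction arbitrary: b rule: Ctx.induct)
  case Ctx_Hole
  then show ?case by (simp add: join_least)
next
  case (Ctx_Mul_left c t)
  then show ?case by (simp add: eval_W residuation_right)
next
  case (Ctx_Mul_right c t)
  then show ?case by (simp add: eval_W residuation_left)
qed

definition basic :: "'a tm \<Rightarrow> 'a \<Rightarrow> 'a tm set" where
  "basic c b = {w \<in> W. eval C (val w) c \<sqsubseteq> b}"

text \<open>The closure of the residuated frame, generated only by the basic sets with target in \<open>B\<close>:
  this is what leaves finitely many closed sets.\<close>

definition \<gamma> :: "'a tm set \<Rightarrow> 'a tm set" where
  "\<gamma> S = {w \<in> W. \<forall>c\<in>Ctx. \<forall>b\<in>B. S \<subseteq> basic c b \<longrightarrow> w \<in> basic c b}"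

definition Closed :: "'a tm set set" where
  "Closed = {X. X \<subseteq> W \<and> \<gamma> X = X}"

definition mul_set :: "'a tm set \<Rightarrow> 'a tm set \<Rightarrow> 'a tm set" (infixl "\<odot>" 70) where
  "X \<odot> Y = {Mul x y | x y. x \<in> X \<and> y \<in> Y}"

lemma basic_W: "basic c b \<subseteq> W"
  unfolding basic_def by blast

lemma \<gamma>_W: "\<gamma> S \<subseteq> W"
  and \<gamma>_ext: "S \<subseteq> W \<Longrightarrow> S \<subseteq> \<gamma> S"
  and \<gamma>_mono: "S \<subseteq> T \<Longrightarrow> \<gamma> S \<subseteq> \<gamma> T"
  unfolding \<gamma>_def by blast+

lemma \<gamma>_idem [simp]: "\<gamma> (\<gamma> S) = \<gamma> S"
  using \<gamma>_ext[OF \<gamma>_W] unfolding \<gamma>_def by blast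

lemma Closed_iff: "X \<in> Closed \<longleftrightarrow> X \<subseteq> W \<and> \<gamma> X \<subseteq> X"
  unfolding Closed_def using \<gamma>_ext by blast

lemma \<gamma>_Closed: "\<gamma> S \<in> Closed"
  unfolding Closed_def using \<gamma>_W by simp

lemma Closed_W: "X \<in> Closed \<Longrightarrow> X \<subseteq> W"
  and Closed_\<gamma>: "X \<in> Closed \<Longrightarrow> \<gamma> X = X"
  unfolding Closed_def by blast+

lemma \<gamma>_least: "S \<subseteq> X \<Longrightarrow> X \<in> Closed \<Longrightarrow> \<gamma> S \<subseteq> X"
  using \<gamma>_mono Closed_\<gamma> by blast

lemma basic_Closed: "c \<in> Ctx \<Longrightarrow> b \<in> B \<Longrightarrow> basic c b \<in> Closed"
  unfolding Closed_iff \<gamma>_def using basic_W by blast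

lemma W_Closed: "W \<in> Closed"
  unfolding Closed_iff using \<gamma>_W by blast

lemma inter_Closed: "X \<in> Closed \<Longrightarrow> Y \<in> Closed \<Longrightarrow> X \<inter> Y \<in> Closed"
  unfolding Closed_iff using \<gamma>_mono by blast

lemma \<gamma>_downward:
  assumes w: "w \<in> W" and x: "x \<in> \<gamma> S" and le: "val w \<sqsubseteq> val x"
  shows "w \<in> \<gamma> S"
  unfolding \<gamma>_def
proof (intro CollectI conjI w ballI impI)
  fix c b assume cb: "c \<in> Ctx" "b \<in> B" "S \<subseteq> basic c b"
  have xW: "x \<in> W" using x \<gamma>_W by blast
  have "eval C (val x) c \<sqsubseteq> b" using x cb unfolding \<gamma>_def basic_def by blast
  moreover have "eval C (val w) c \<sqsubseteq> eval C (val x) c" using eval_Ctx_mono cb(1) le w xW by simp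
  ultimately have "eval C (val w) c \<sqsubseteq> b"
    using le_trans cb B_carrier w xW by (meson eval_Ctx_closed subsetD val_closed)
  then show "w \<in> basic c b" unfolding basic_def using w by blast
qed

lemma Closed_downward: "X \<in> Closed \<Longrightarrow> w \<in> W \<Longrightarrow> x \<in> X \<Longrightarrow> val w \<sqsubseteq> val x \<Longrightarrow> w \<in> X"
  using \<gamma>_downward Closed_\<gamma> by metis

lemma in_\<gamma>_if_below: "S \<subseteq> W \<Longrightarrow> w \<in> W \<Longrightarrow> x \<in> S \<Longrightarrow> val w \<sqsubseteq> val x \<Longrightarrow> w \<in> \<gamma> S"
  using \<gamma>_downward \<gamma>_ext by blast

lemma \<gamma>_subset_if_dominated:
  assumes "S \<subseteq> W" "T \<subseteq> W" "\<And>s. s \<in> S \<Longrightarrow> \<exists>t\<in>T. val s \<sqsubseteq> val t"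
  shows "\<gamma> S \<subseteq> \<gamma> T"
  using assms in_\<gamma>_if_below \<gamma>_least[OF _ \<gamma>_Closed] by (meson subsetD subsetI)

lemma Ctx_fill_left: "c \<in> Ctx \<Longrightarrow> x \<in> W \<Longrightarrow> fill c (Mul x Hole) \<in> Ctx"
  and Ctx_fill_right: "c \<in> Ctx \<Longrightarrow> x \<in> W \<Longrightarrow> fill c (Mul Hole x) \<in> Ctx"
  by (induction rule: Ctx.induct)
    (auto simp: W_def fill_ground intro: Ctx.intros)

lemma basic_fill_left: "x \<in> W \<Longrightarrow> w \<in> W \<Longrightarrow> w \<in> basic (fill c (Mul x Hole)) b \<longleftrightarrow> Mul x w \<in> basic c b"
  and basic_fill_right: "x \<in> W \<Longrightarrow> w \<in> W \<Longrightarrow> w \<in> basic (fill c (Mul Hole x)) b \<longleftrightarrow> Mul w x \<in> basic c b"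
  unfolding basic_def by (simp_all add: eval_fill eval_W)

lemma mul_set_W: "S \<subseteq> W \<Longrightarrow> T \<subseteq> W \<Longrightarrow> S \<odot> T \<subseteq> W"
  unfolding mul_set_def by auto

lemma mul_set_mono: "S \<subseteq> S' \<Longrightarrow> T \<subseteq> T' \<Longrightarrow> S \<odot> T \<subseteq> S' \<odot> T'"
  unfolding mul_set_def by blast

lemma Mul_left_\<gamma>:
  assumes cb: "c \<in> Ctx" "b \<in> B" and x: "x \<in> W" and y: "y \<in> \<gamma> T"
    and T: "\<And>t. t \<in> T \<Longrightarrow> Mul x t \<in> basic c b"
  shows "Mul x y \<in> basic c b"
proof -
  have "T \<subseteq> basic (fill c (Mul x Hole)) b"
    using T basic_fill_left[OF x] basic_W by fastforce
  then have "y \<in> basic (fill c (Mul x Hole)) b"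
    using y Ctx_fill_left[OF cb(1) x] cb(2) unfolding \<gamma>_def by blast
  then show ?thesis using basic_fill_left[OF x] y \<gamma>_W by blast
qed

lemma Mul_right_\<gamma>:
  assumes cb: "c \<in> Ctx" "b \<in> B" and y: "y \<in> W" and x: "x \<in> \<gamma> S"
    and S: "\<And>s. s \<in> S \<Longrightarrow> Mul s y \<in> basic c b"
  shows "Mul x y \<in> basic c b"
proof -
  have "S \<subseteq> basic (fill c (Mul Hole y)) b"
    using S basic_fill_right[OF y] basic_W by fastforce
  then have "x \<in> basic (fill c (Mul Hole y)) b"
    using x Ctx_fill_right[OF cb(1) y] cb(2) unfolding \<gamma>_def by blast
  then show ?thesis using basic_fill_right[OF y] x \<gamma>_W by blast
qed

lemma \<gamma>_mul_set:
  assumes "S \<subseteq> W" "T \<subseteq> W"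
  shows "\<gamma> (\<gamma> S \<odot> \<gamma> T) = \<gamma> (S \<odot> T)"
proof
  have sub: "\<gamma> S \<odot> \<gamma> T \<subseteq> \<gamma> (S \<odot> T)"
  proof
    fix z assume "z \<in> \<gamma> S \<odot> \<gamma> T"
    then obtain x y where z: "z = Mul x y" and x: "x \<in> \<gamma> S" and y: "y \<in> \<gamma> T"
      unfolding mul_set_def by blast
    have xy: "x \<in> W" "y \<in> W" using x y \<gamma>_W by blast+
    show "z \<in> \<gamma> (S \<odot> T)" unfolding \<gamma>_def z
    proof (intro CollectI conjI ballI impI)
      show "Mul x y \<in> W" using xy by simp
      fix c b assume cb: "c \<in> Ctx" "b \<in> B" "S \<odot> T \<subseteq> basic c b"
      have "Mul s y \<in> basic c b" if s: "s \<in> S" for s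
      proof (rule Mul_left_\<gamma>[OF cb(1,2) _ y])
        show "s \<in> W" using s assms(1) by blast
        show "Mul s t \<in> basic c b" if "t \<in> T" for t
          using s that cb(3) unfolding mul_set_def by blast
      qed
      then show "Mul x y \<in> basic c b" using Mul_right_\<gamma>[OF cb(1,2) xy(2) x] by blast
    qed
  qed
  show "\<gamma> (\<gamma> S \<odot> \<gamma> T) \<subseteq> \<gamma> (S \<odot> T)"
    using \<gamma>_mono[OF sub] by simp
  show "\<gamma> (S \<odot> T) \<subseteq> \<gamma> (\<gamma> S \<odot> \<gamma> T)"
    using \<gamma>_mono[OF mul_set_mono[OF \<gamma>_ext \<gamma>_ext]] assms .
qed

lemma ldiv_Closed:
  assumes X: "X \<subseteq> W" and Z: "Z \<in> Closed"
  shows "{w \<in> W. \<forall>x\<in>X. Mul x w \<in> Z} \<in> Closed" (is "?R \<in> Closed")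
proof -
  have "w \<in> ?R" if w: "w \<in> \<gamma> ?R" for w
  proof -
    have "Mul x w \<in> \<gamma> Z" if x: "x \<in> X" for x
      unfolding \<gamma>_def
    proof (intro CollectI conjI ballI impI)
      show "Mul x w \<in> W" using w x X \<gamma>_W by auto
      fix c b assume cb: "c \<in> Ctx" "b \<in> B" "Z \<subseteq> basic c b"
      show "Mul x w \<in> basic c b"
      proof (rule Mul_left_\<gamma>[OF cb(1,2) _ w])
        show "x \<in> W" using x X by blast
        show "Mul x t \<in> basic c b" if "t \<in> ?R" for t using that x cb(3) by blast
      qed
    qed
    then show ?thesis using w \<gamma>_W Closed_\<gamma>[OF Z] by auto
  qed
  then show ?thesis unfolding Closed_iff by blast
qed

lemma rdiv_Closed:
  assumes Y: "Y \<subseteq> W" and Z: "Z \<in> Closed"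
  shows "{w \<in> W. \<forall>y\<in>Y. Mul w y \<in> Z} \<in> Closed" (is "?R \<in> Closed")
proof -
  have "w \<in> ?R" if w: "w \<in> \<gamma> ?R" for w
  proof -
    have "Mul w y \<in> \<gamma> Z" if y: "y \<in> Y" for y
      unfolding \<gamma>_def
    proof (intro CollectI conjI ballI impI)
      show "Mul w y \<in> W" using w y Y \<gamma>_W by auto
      fix c b assume cb: "c \<in> Ctx" "b \<in> B" "Z \<subseteq> basic c b"
      show "Mul w y \<in> basic c b"
      proof (rule Mul_right_\<gamma>[OF cb(1,2) _ w])
        show "y \<in> W" using y Y by blast
        show "Mul t y \<in> basic c b" if "t \<in> ?R" for t using that y cb(3) by blast
      qed
    qed
    then show ?thesis using w \<gamma>_W Closed_\<gamma>[OF Z] by auto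
  qed
  then show ?thesis unfolding Closed_iff by blast
qed

section \<open>Finitely many closed sets\<close>

lemma basic_mono_emb:
  assumes "emb c c'" "c' \<in> Ctx" "b \<in> A"
  shows "basic c b \<subseteq> basic c' b"
proof
  fix w assume w: "w \<in> basic c b"
  then have wW: "w \<in> W" and "eval C (val w) c \<sqsubseteq> b" unfolding basic_def by blast+
  moreover have "atoms c \<subseteq> A" using emb_atoms[OF assms(1)] Ctx_atoms[OF assms(2)] by blast
  moreover have "eval C (val w) c' \<sqsubseteq> eval C (val w) c"
    using eval_emb[OF assms(1) Ctx_atoms[OF assms(2)]] wW by simp
  ultimately have "eval C (val w) c' \<sqsubseteq> b"
    using le_trans assms eval_closed by (meson eval_Ctx_closed val_closed)
  then show "w \<in> basic c' b" unfolding basic_def using wW by blast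
qed

lemma basic_upward:
  assumes w: "w \<in> basic c b" and w': "w' \<in> W" "emb w w'" and c: "c \<in> Ctx" and b: "b \<in> A"
  shows "w' \<in> basic c b"
proof -
  have wW: "w \<in> W" and "eval C (val w) c \<sqsubseteq> b" using w unfolding basic_def by blast+
  moreover have "val w' \<sqsubseteq> val w" unfolding val_def using eval_emb[OF w'(2) W_atoms[OF w'(1)]] by simp
  then have "eval C (val w') c \<sqsubseteq> eval C (val w) c" using eval_Ctx_mono c wW w' by simp
  ultimately have "eval C (val w') c \<sqsubseteq> b"
    using le_trans b c w' by (meson eval_Ctx_closed val_closed)
  then show ?thesis unfolding basic_def using w' by blast
qed

lemma finite_basics:
  assumes b: "b \<in> A"
  shows "finite {basic c b | c. c \<in> Ctx}"
proof (rule ccontr)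
  assume "infinite {basic c b | c. c \<in> Ctx}"
  from infinite_iff_countable_subset[THEN iffD1, OF this] obtain s :: "nat \<Rightarrow> 'a tm set"
    where s: "inj s" "range s \<subseteq> {basic c b | c. c \<in> Ctx}"
    by blast
  have "\<forall>n. \<exists>c. c \<in> Ctx \<and> basic c b = s n" using s(2) by (auto simp: image_subset_iff) metis
  then obtain c where c: "\<And>n. c n \<in> Ctx" "\<And>n. basic (c n) b = s n" by metis
  have c_good: "\<exists>i j. i < j \<and> emb (c (\<psi> i)) (c (\<psi> j))" for \<psi> :: "nat \<Rightarrow> nat"
    using kruskal[OF finite_Lab, of "\<lambda>i. c (\<psi> i)"] Ctx_Lab c(1) unfolding good_def by blast
  obtain \<phi> :: "nat \<Rightarrow> nat"
    where \<phi>: "strict_mono \<phi>" "\<And>i j. i < j \<Longrightarrow> emb (c (\<phi> i)) (c (\<phi> j))"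
    using chain_subseq[where x = c and R = emb, OF c_good] by blast
  define U where "U k = basic (c (\<phi> k)) b" for k
  have "\<exists>k. U (Suc k) = U k"
  proof (rule upset_chain_stabilises[OF finite_Lab, where S = W])
    show "atoms t \<subseteq> Lab" if "t \<in> W" for t using that unfolding W_def by blast
    show "U k \<subseteq> W" for k unfolding U_def by (rule basic_W)
    show "U k \<subseteq> U (Suc k)" for k unfolding U_def using \<phi>(2)[of k "Suc k"] c(1) b
      by (simp add: basic_mono_emb)
    show "t \<in> U k" if "s \<in> U k" "emb s t" "t \<in> W" for k s t
      using basic_upward that c(1) b unfolding U_def by blast
  qed
  moreover have "U (Suc k) \<noteq> U k" for k
    unfolding U_def c(2) using s(1) strict_mono_eq[OF \<phi>(1)] by (simp add: inj_eq)
  ultimately show False by blast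
qed

lemma finite_Closed: "finite Closed"
proof -
  define F where "F = (\<Union>b\<in>B. {basic c b | c. c \<in> Ctx})"
  have "finite F" unfolding F_def using finite_B finite_basics B_carrier by blast
  have "X = W \<inter> \<Inter>{Y \<in> F. X \<subseteq> Y}" if X: "X \<in> Closed" for X
  proof
    show "X \<subseteq> W \<inter> \<Inter>{Y \<in> F. X \<subseteq> Y}" using Closed_W[OF X] by auto
    have "W \<inter> \<Inter>{Y \<in> F. X \<subseteq> Y} \<subseteq> \<gamma> X" unfolding \<gamma>_def F_def by blast
    then show "W \<inter> \<Inter>{Y \<in> F. X \<subseteq> Y} \<subseteq> X" using Closed_\<gamma>[OF X] by simp
  qed
  then have "Closed \<subseteq> (\<lambda>G. W \<inter> \<Inter>G) ` Pow F" by blast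
  moreover have "finite ((\<lambda>G. W \<inter> \<Inter>G) ` Pow F)" using \<open>finite F\<close> by simp
  ultimately show ?thesis by (rule finite_subset)
qed

section \<open>The algebra of closed sets\<close>

definition frame_alg :: "'a tm set irlu" where
  "frame_alg = \<lparr>carrier = Closed, meet = (\<inter>), join = (\<lambda>X Y. \<gamma> (X \<union> Y)),
     mult = (\<lambda>X Y. \<gamma> (X \<odot> Y)), ldiv = (\<lambda>X Z. {w \<in> W. \<forall>x\<in>X. Mul x w \<in> Z}),
     rdiv = (\<lambda>Z Y. {w \<in> W. \<forall>y\<in>Y. Mul w y \<in> Z}), one = W, bang = (\<lambda>X. \<gamma> (Bang ` X))\<rparr>"

lemma frame_alg_simps [simp]:
  "carrier frame_alg = Closed" "meet frame_alg X Y = X \<inter> Y" "join frame_alg X Y = \<gamma> (X \<union> Y)"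
  "mult frame_alg X Y = \<gamma> (X \<odot> Y)" "ldiv frame_alg X Z = {w \<in> W. \<forall>x\<in>X. Mul x w \<in> Z}"
  "rdiv frame_alg Z Y = {w \<in> W. \<forall>y\<in>Y. Mul w y \<in> Z}" "one frame_alg = W"
  "bang frame_alg X = \<gamma> (Bang ` X)"
  unfolding frame_alg_def by simp_all

lemma leq_frame_alg [simp]: "leq frame_alg X Y \<longleftrightarrow> X \<subseteq> Y"
  unfolding leq_def by auto

lemma Bang_image_W: "X \<subseteq> W \<Longrightarrow> Bang ` X \<subseteq> W"
  by auto

lemma mul_set_iff [simp]: "Mul x y \<in> S \<odot> T \<longleftrightarrow> x \<in> S \<and> y \<in> T"
  unfolding mul_set_def by blast

lemma mul_setE [elim!]:
  assumes "z \<in> S \<odot> T"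
  obtains x y where "z = Mul x y" "x \<in> S" "y \<in> T"
  using assms unfolding mul_set_def by blast

lemma \<gamma>_Un_\<gamma>:
  assumes "S \<subseteq> W" "T \<subseteq> W"
  shows "\<gamma> (S \<union> \<gamma> T) = \<gamma> (S \<union> T)"
proof (rule subset_antisym)
  have "S \<union> \<gamma> T \<subseteq> \<gamma> (S \<union> T)"
    using \<gamma>_ext[of "S \<union> T"] \<gamma>_mono[of T "S \<union> T"] assms by auto
  from \<gamma>_mono[OF this] show "\<gamma> (S \<union> \<gamma> T) \<subseteq> \<gamma> (S \<union> T)" by simp
  show "\<gamma> (S \<union> T) \<subseteq> \<gamma> (S \<union> \<gamma> T)" using \<gamma>_ext[OF assms(2)] by (intro \<gamma>_mono) blast
qed

lemma \<gamma>_mul_set_left: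
  assumes "S \<subseteq> W" "T \<subseteq> W"
  shows "\<gamma> (\<gamma> S \<odot> T) = \<gamma> (S \<odot> T)"
proof (rule subset_antisym)
  have "\<gamma> (\<gamma> S \<odot> T) \<subseteq> \<gamma> (\<gamma> S \<odot> \<gamma> T)" using \<gamma>_ext[OF assms(2)] by (intro \<gamma>_mono mul_set_mono) auto
  then show "\<gamma> (\<gamma> S \<odot> T) \<subseteq> \<gamma> (S \<odot> T)" using \<gamma>_mul_set[OF assms] by simp
  show "\<gamma> (S \<odot> T) \<subseteq> \<gamma> (\<gamma> S \<odot> T)" using \<gamma>_ext[OF assms(1)] by (intro \<gamma>_mono mul_set_mono) auto
qed

lemma \<gamma>_mul_set_right:
  assumes "S \<subseteq> W" "T \<subseteq> W"
  shows "\<gamma> (S \<odot> \<gamma> T) = \<gamma> (S \<odot> T)"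
proof (rule subset_antisym)
  have "\<gamma> (S \<odot> \<gamma> T) \<subseteq> \<gamma> (\<gamma> S \<odot> \<gamma> T)" using \<gamma>_ext[OF assms(1)] by (intro \<gamma>_mono mul_set_mono) auto
  then show "\<gamma> (S \<odot> \<gamma> T) \<subseteq> \<gamma> (S \<odot> T)" using \<gamma>_mul_set[OF assms] by simp
  show "\<gamma> (S \<odot> T) \<subseteq> \<gamma> (S \<odot> \<gamma> T)" using \<gamma>_ext[OF assms(2)] by (intro \<gamma>_mono mul_set_mono) auto
qed

lemma closed_ops_frame_alg: "closed_ops frame_alg"
  unfolding closed_ops_def frame_alg_simps
  using W_Closed \<gamma>_Closed inter_Closed ldiv_Closed rdiv_Closed Closed_W by auto

lemma is_lattice_frame_alg: "is_lattice frame_alg"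
  unfolding is_lattice_def frame_alg_simps
proof (intro conjI ballI)
  fix X Y assume X: "X \<in> Closed" and Y: "Y \<in> Closed"
  show "X \<inter> Y = Y \<inter> X" "\<gamma> (X \<union> Y) = \<gamma> (Y \<union> X)" by (simp_all add: Int_commute Un_commute)
  show "X \<inter> \<gamma> (X \<union> Y) = X" using \<gamma>_ext[of "X \<union> Y"] Closed_W[OF X] Closed_W[OF Y] by blast
  show "\<gamma> (X \<union> X \<inter> Y) = X" using Closed_\<gamma>[OF X] by (simp add: Un_absorb2)
next
  fix X Y Z assume "X \<in> Closed" "Y \<in> Closed" "Z \<in> Closed"
  then have W: "X \<subseteq> W" "Y \<subseteq> W" "Z \<subseteq> W" using Closed_W by auto
  show "X \<inter> (Y \<inter> Z) = X \<inter> Y \<inter> Z" by (rule Int_assoc[symmetric])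
  have "\<gamma> (X \<union> \<gamma> (Y \<union> Z)) = \<gamma> (X \<union> Y \<union> Z)" using \<gamma>_Un_\<gamma> W by (simp add: Un_assoc)
  moreover have "\<gamma> (\<gamma> (X \<union> Y) \<union> Z) = \<gamma> (X \<union> Y \<union> Z)"
    using \<gamma>_Un_\<gamma>[of Z "X \<union> Y"] W by (simp add: Un_commute Un_left_commute)
  ultimately show "\<gamma> (X \<union> \<gamma> (Y \<union> Z)) = \<gamma> (\<gamma> (X \<union> Y) \<union> Z)" by simp
qed

lemma \<gamma>_W_mul_set:
  assumes X: "X \<in> Closed"
  shows "\<gamma> (W \<odot> X) = X"
proof (rule subset_antisym)
  have XW: "X \<subseteq> W" using Closed_W[OF X] .
  have "W \<odot> X \<subseteq> X"
  proof
    fix z assume "z \<in> W \<odot> X"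
    then obtain w x where z: "z = Mul w x" "w \<in> W" "x \<in> X" by blast
    then show "z \<in> X" using Closed_downward[OF X, of z x] XW mult_le_right by auto
  qed
  then show "\<gamma> (W \<odot> X) \<subseteq> X" using \<gamma>_least[OF _ X] by blast
  show "X \<subseteq> \<gamma> (W \<odot> X)"
  proof
    fix x assume x: "x \<in> X"
    show "x \<in> \<gamma> (W \<odot> X)"
      by (rule in_\<gamma>_if_below[OF mul_set_W[OF order_refl XW], of _ "Mul (Atom (one C)) x"])
        (use x XW one_W in auto)
  qed
qed

lemma \<gamma>_mul_set_W:
  assumes X: "X \<in> Closed"
  shows "\<gamma> (X \<odot> W) = X"
proof (rule subset_antisym)
  have XW: "X \<subseteq> W" using Closed_W[OF X] .
  have "X \<odot> W \<subseteq> X"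
  proof
    fix z assume "z \<in> X \<odot> W"
    then obtain x w where z: "z = Mul x w" "x \<in> X" "w \<in> W" by blast
    then show "z \<in> X" using Closed_downward[OF X, of z x] XW mult_le_left by auto
  qed
  then show "\<gamma> (X \<odot> W) \<subseteq> X" using \<gamma>_least[OF _ X] by blast
  show "X \<subseteq> \<gamma> (X \<odot> W)"
  proof
    fix x assume x: "x \<in> X"
    show "x \<in> \<gamma> (X \<odot> W)"
      by (rule in_\<gamma>_if_below[OF mul_set_W[OF XW order_refl], of _ "Mul x (Atom (one C))"])
        (use x XW one_W in auto)
  qed
qed

lemma residuation_frame_alg:
  assumes "X \<in> Closed" "Y \<in> Closed" "Z \<in> Closed"
  shows "\<gamma> (X \<odot> Y) \<subseteq> Z \<longleftrightarrow> Y \<subseteq> {w \<in> W. \<forall>x\<in>X. Mul x w \<in> Z}"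
    and "\<gamma> (X \<odot> Y) \<subseteq> Z \<longleftrightarrow> X \<subseteq> {w \<in> W. \<forall>y\<in>Y. Mul w y \<in> Z}"
proof -
  have XY: "X \<subseteq> W" "Y \<subseteq> W" using assms Closed_W by auto
  have "\<gamma> (X \<odot> Y) \<subseteq> Z \<longleftrightarrow> X \<odot> Y \<subseteq> Z"
  proof
    assume "\<gamma> (X \<odot> Y) \<subseteq> Z"
    with \<gamma>_ext[OF mul_set_W[OF XY]] show "X \<odot> Y \<subseteq> Z" by (rule order_trans)
  next
    assume "X \<odot> Y \<subseteq> Z"
    then show "\<gamma> (X \<odot> Y) \<subseteq> Z" using assms(3) by (rule \<gamma>_least)
  qed
  also have "\<dots> \<longleftrightarrow> (\<forall>x\<in>X. \<forall>y\<in>Y. Mul x y \<in> Z)"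
    unfolding mul_set_def by blast
  finally have eq: "\<gamma> (X \<odot> Y) \<subseteq> Z \<longleftrightarrow> (\<forall>x\<in>X. \<forall>y\<in>Y. Mul x y \<in> Z)" .
  show "\<gamma> (X \<odot> Y) \<subseteq> Z \<longleftrightarrow> Y \<subseteq> {w \<in> W. \<forall>x\<in>X. Mul x w \<in> Z}"
    unfolding eq using XY by auto
  show "\<gamma> (X \<odot> Y) \<subseteq> Z \<longleftrightarrow> X \<subseteq> {w \<in> W. \<forall>y\<in>Y. Mul w y \<in> Z}"
    unfolding eq using XY by auto
qed

lemma rlu_groupoid_frame_alg: "rlu_groupoid frame_alg"
  unfolding rlu_groupoid_def frame_alg_simps leq_frame_alg
  using closed_ops_frame_alg is_lattice_frame_alg \<gamma>_W_mul_set \<gamma>_mul_set_W residuation_frame_alg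
  by simp

lemma integral_frame_alg: "integral frame_alg"
  unfolding integral_def using Closed_W by simp

lemma bang_mult_frame_alg:
  assumes XY: "X \<subseteq> W" "Y \<subseteq> W"
  shows "\<gamma> (\<gamma> (Bang ` X) \<odot> \<gamma> (Bang ` Y)) \<subseteq> \<gamma> (Bang ` \<gamma> (X \<odot> Y))"
proof -
  have "\<gamma> (Bang ` X \<odot> Bang ` Y) \<subseteq> \<gamma> (Bang ` \<gamma> (X \<odot> Y))"
  proof (rule \<gamma>_subset_if_dominated)
    show "Bang ` X \<odot> Bang ` Y \<subseteq> W" "Bang ` \<gamma> (X \<odot> Y) \<subseteq> W"
      using XY Bang_image_W[OF \<gamma>_W] by (auto intro!: mul_set_W)
    fix s assume "s \<in> Bang ` X \<odot> Bang ` Y"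
    then obtain x y where s: "s = Mul (Bang x) (Bang y)" "x \<in> X" "y \<in> Y" by blast
    then have "Mul x y \<in> \<gamma> (X \<odot> Y)" using \<gamma>_ext[OF mul_set_W[OF XY]] by auto
    moreover have "val s \<sqsubseteq> val (Bang (Mul x y))" using s XY by (simp add: bang_mult subsetD)
    ultimately show "\<exists>t\<in>Bang ` \<gamma> (X \<odot> Y). val s \<sqsubseteq> val t" by blast
  qed
  then show ?thesis using \<gamma>_mul_set XY by (simp add: Bang_image_W)
qed

lemma interior_rlu_groupoid_frame_alg: "interior_rlu_groupoid frame_alg"
  unfolding interior_rlu_groupoid_def frame_alg_simps leq_frame_alg
proof (intro conjI ballI impI rlu_groupoid_frame_alg)
  show "W \<subseteq> \<gamma> (Bang ` W)"
  proof
    fix w assume w: "w \<in> W"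
    have "val w \<sqsubseteq> val (Bang (Atom (one C)))"
      using le_trans[OF _ _ _ le_one one_le_bang_one] w by simp
    then show "w \<in> \<gamma> (Bang ` W)" using in_\<gamma>_if_below[OF Bang_image_W] w one_W by blast
  qed
next
  fix X Y assume "X \<in> Closed" "Y \<in> Closed"
  then show "\<gamma> (\<gamma> (Bang ` X) \<odot> \<gamma> (Bang ` Y)) \<subseteq> \<gamma> (Bang ` \<gamma> (X \<odot> Y))"
    using bang_mult_frame_alg Closed_W by blast
next
  fix X assume X: "X \<in> Closed"
  have XW: "X \<subseteq> W" using Closed_W[OF X] .
  have "Bang ` X \<subseteq> X" using Closed_downward[OF X] XW bang_le by auto
  then show "\<gamma> (Bang ` X) \<subseteq> X" using \<gamma>_least[OF _ X] by blast
  show "\<gamma> (Bang ` X) \<subseteq> \<gamma> (Bang ` \<gamma> (Bang ` X))"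
  proof (rule \<gamma>_subset_if_dominated)
    show "Bang ` X \<subseteq> W" "Bang ` \<gamma> (Bang ` X) \<subseteq> W" using XW Bang_image_W[OF \<gamma>_W] by auto
    fix s assume "s \<in> Bang ` X"
    then obtain x where s: "s = Bang x" "x \<in> X" by blast
    then have "Bang x \<in> \<gamma> (Bang ` X)" using \<gamma>_ext[OF Bang_image_W[OF XW]] by blast
    moreover have "val s \<sqsubseteq> val (Bang (Bang x))" using s XW by (simp add: bang_le_bang_bang subsetD)
    ultimately show "\<exists>t\<in>Bang ` \<gamma> (Bang ` X). val s \<sqsubseteq> val t" by blast
  qed
next
  fix X Y :: "'a tm set" assume "X \<subseteq> Y"
  then show "\<gamma> (Bang ` X) \<subseteq> \<gamma> (Bang ` Y)" by (intro \<gamma>_mono image_mono)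
qed

lemma \<gamma>_eq_if_val_eq:
  assumes "S \<subseteq> W" "T \<subseteq> W"
    and "\<And>s. s \<in> S \<Longrightarrow> \<exists>t\<in>T. val s = val t" "\<And>t. t \<in> T \<Longrightarrow> \<exists>s\<in>S. val t = val s"
  shows "\<gamma> S = \<gamma> T"
proof (rule subset_antisym)
  show "\<gamma> S \<subseteq> \<gamma> T"
    by (rule \<gamma>_subset_if_dominated[OF assms(1,2)]) (metis assms(1,3) le_refl subsetD val_closed)
  show "\<gamma> T \<subseteq> \<gamma> S"
    by (rule \<gamma>_subset_if_dominated[OF assms(2,1)]) (metis assms(2,4) le_refl subsetD val_closed)
qed

lemmas \<gamma>_mul_set_simps = \<gamma>_mul_set_left \<gamma>_mul_set_right mul_set_W Bang_image_W \<gamma>_W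

lemma satisfies_e_frame_alg:
  assumes "satisfies C Eq_e"
  shows "satisfies frame_alg Eq_e"
  unfolding satisfies.simps frame_alg_simps leq_frame_alg
proof (intro ballI)
  fix X Y assume "X \<in> Closed" "Y \<in> Closed"
  then have XY: "X \<subseteq> W" "Y \<subseteq> W" using Closed_W by auto
  show "\<gamma> (X \<odot> Y) \<subseteq> \<gamma> (Y \<odot> X)"
  proof (rule \<gamma>_subset_if_dominated)
    fix s assume "s \<in> X \<odot> Y"
    then obtain x y where "s = Mul x y" "x \<in> X" "y \<in> Y" by blast
    then show "\<exists>t\<in>Y \<odot> X. val s \<sqsubseteq> val t"
      using assms XY by (intro bexI[of _ "Mul y x"]) (auto simp: subsetD)
  qed (use XY in \<open>simp_all add: mul_set_W\<close>)
qed

lemma satisfies_c_frame_alg: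
  assumes "satisfies C Eq_c"
  shows "satisfies frame_alg Eq_c"
  unfolding satisfies.simps frame_alg_simps leq_frame_alg
proof (intro ballI subsetI)
  fix X x assume "X \<in> Closed" "x \<in> X"
  then have "X \<subseteq> W" "x \<in> W" using Closed_W by auto
  then show "x \<in> \<gamma> (X \<odot> X)"
    using in_\<gamma>_if_below[OF mul_set_W, of X X x "Mul x x"] assms \<open>x \<in> X\<close> by simp
qed

lemma satisfies_bang_c_frame_alg:
  assumes "satisfies C Eq_bang_c"
  shows "satisfies frame_alg Eq_bang_c"
  unfolding satisfies.simps frame_alg_simps leq_frame_alg
proof (intro ballI)
  fix X assume "X \<in> Closed"
  then have X: "X \<subseteq> W" using Closed_W by auto
  have "\<gamma> (Bang ` X) \<subseteq> \<gamma> (Bang ` X \<odot> Bang ` X)"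
  proof (rule \<gamma>_subset_if_dominated)
    fix s assume "s \<in> Bang ` X"
    then obtain x where "s = Bang x" "x \<in> X" by blast
    then show "\<exists>t\<in>Bang ` X \<odot> Bang ` X. val s \<sqsubseteq> val t"
      using assms X by (intro bexI[of _ "Mul s s"]) (auto simp: subsetD)
  qed (use X in \<open>simp_all add: \<gamma>_mul_set_simps\<close>)
  then show "\<gamma> (Bang ` X) \<subseteq> \<gamma> (\<gamma> (Bang ` X) \<odot> \<gamma> (Bang ` X))"
    using X by (simp add: \<gamma>_mul_set_simps)
qed

lemma satisfies_bang_e_frame_alg:
  assumes "satisfies C Eq_bang_e"
  shows "satisfies frame_alg Eq_bang_e"
  unfolding satisfies.simps frame_alg_simps
proof (intro ballI)
  fix X Y assume "X \<in> Closed" "Y \<in> Closed"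
  then have XY: "X \<subseteq> W" "Y \<subseteq> W" using Closed_W by auto
  have "\<gamma> (Bang ` X \<odot> Y) = \<gamma> (Y \<odot> Bang ` X)"
  proof (rule \<gamma>_eq_if_val_eq)
    fix s assume "s \<in> Bang ` X \<odot> Y"
    then obtain x y where "s = Mul (Bang x) y" "x \<in> X" "y \<in> Y" by blast
    then show "\<exists>t\<in>Y \<odot> Bang ` X. val s = val t"
      using assms XY by (intro bexI[of _ "Mul y (Bang x)"]) (auto simp: subsetD)
  next
    fix t assume "t \<in> Y \<odot> Bang ` X"
    then obtain x y where "t = Mul y (Bang x)" "x \<in> X" "y \<in> Y" by blast
    then show "\<exists>s\<in>Bang ` X \<odot> Y. val t = val s"
      using assms XY by (intro bexI[of _ "Mul (Bang x) y"]) (auto simp: subsetD)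
  qed (use XY in \<open>simp_all add: \<gamma>_mul_set_simps\<close>)
  then show "\<gamma> (\<gamma> (Bang ` X) \<odot> Y) = \<gamma> (Y \<odot> \<gamma> (Bang ` X))"
    using XY by (simp add: \<gamma>_mul_set_simps)
qed

lemma satisfies_bang_a1_frame_alg:
  assumes "satisfies C Eq_bang_a1"
  shows "satisfies frame_alg Eq_bang_a1"
  unfolding satisfies.simps frame_alg_simps
proof (intro ballI)
  fix X Y Z assume "X \<in> Closed" "Y \<in> Closed" "Z \<in> Closed"
  then have XYZ: "X \<subseteq> W" "Y \<subseteq> W" "Z \<subseteq> W" using Closed_W by auto
  have "\<gamma> (Bang ` X \<odot> (Y \<odot> Z)) = \<gamma> (Bang ` X \<odot> Y \<odot> Z)"
  proof (rule \<gamma>_eq_if_val_eq)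
    fix s assume "s \<in> Bang ` X \<odot> (Y \<odot> Z)"
    then obtain x y z where "s = Mul (Bang x) (Mul y z)" "x \<in> X" "y \<in> Y" "z \<in> Z" by blast
    then show "\<exists>t\<in>Bang ` X \<odot> Y \<odot> Z. val s = val t"
      using assms XYZ by (intro bexI[of _ "Mul (Mul (Bang x) y) z"]) (auto simp: subsetD)
  next
    fix t assume "t \<in> Bang ` X \<odot> Y \<odot> Z"
    then obtain x y z where "t = Mul (Mul (Bang x) y) z" "x \<in> X" "y \<in> Y" "z \<in> Z" by blast
    then show "\<exists>s\<in>Bang ` X \<odot> (Y \<odot> Z). val t = val s"
      using assms XYZ by (intro bexI[of _ "Mul (Bang x) (Mul y z)"]) (auto simp: subsetD)
  qed (use XYZ in \<open>simp_all add: \<gamma>_mul_set_simps\<close>)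
  then show "\<gamma> (\<gamma> (Bang ` X) \<odot> \<gamma> (Y \<odot> Z)) = \<gamma> (\<gamma> (\<gamma> (Bang ` X) \<odot> Y) \<odot> Z)"
    using XYZ by (simp add: \<gamma>_mul_set_simps)
qed

lemma satisfies_bang_a2_frame_alg:
  assumes "satisfies C Eq_bang_a2"
  shows "satisfies frame_alg Eq_bang_a2"
  unfolding satisfies.simps frame_alg_simps
proof (intro ballI)
  fix X Y Z assume "X \<in> Closed" "Y \<in> Closed" "Z \<in> Closed"
  then have XYZ: "X \<subseteq> W" "Y \<subseteq> W" "Z \<subseteq> W" using Closed_W by auto
  have "\<gamma> (X \<odot> (Y \<odot> Bang ` Z)) = \<gamma> (X \<odot> Y \<odot> Bang ` Z)"
  proof (rule \<gamma>_eq_if_val_eq)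
    fix s assume "s \<in> X \<odot> (Y \<odot> Bang ` Z)"
    then obtain x y z where "s = Mul x (Mul y (Bang z))" "x \<in> X" "y \<in> Y" "z \<in> Z" by blast
    then show "\<exists>t\<in>X \<odot> Y \<odot> Bang ` Z. val s = val t"
      using assms XYZ by (intro bexI[of _ "Mul (Mul x y) (Bang z)"]) (auto simp: subsetD)
  next
    fix t assume "t \<in> X \<odot> Y \<odot> Bang ` Z"
    then obtain x y z where "t = Mul (Mul x y) (Bang z)" "x \<in> X" "y \<in> Y" "z \<in> Z" by blast
    then show "\<exists>s\<in>X \<odot> (Y \<odot> Bang ` Z). val t = val s"
      using assms XYZ by (intro bexI[of _ "Mul x (Mul y (Bang z))"]) (auto simp: subsetD)
  qed (use XYZ in \<open>simp_all add: \<gamma>_mul_set_simps\<close>)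
  then show "\<gamma> (X \<odot> \<gamma> (Y \<odot> \<gamma> (Bang ` Z))) = \<gamma> (\<gamma> (X \<odot> Y) \<odot> \<gamma> (Bang ` Z))"
    using XYZ by (simp add: \<gamma>_mul_set_simps)
qed

lemma satisfies_frame_alg: "satisfies C e \<Longrightarrow> satisfies frame_alg e"
  by (cases e) (simp_all only: satisfies_e_frame_alg satisfies_c_frame_alg satisfies_bang_e_frame_alg
      satisfies_bang_c_frame_alg satisfies_bang_a1_frame_alg satisfies_bang_a2_frame_alg)

definition dn :: "'a \<Rightarrow> 'a tm set" where
  "dn b = {w \<in> W. val w \<sqsubseteq> b}"

lemma dn_Closed: "b \<in> B \<Longrightarrow> dn b \<in> Closed"
  using basic_Closed[OF Ctx_Hole] unfolding basic_def dn_def by simp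

lemma Atom_dn: "x \<in> Lab \<Longrightarrow> Atom x \<in> dn x"
  using Lab_carrier unfolding dn_def W_def by auto

lemma dn_W: "dn b \<subseteq> W"
  unfolding dn_def by blast

lemma inj_on_dn: "inj_on dn Lab"
proof (rule inj_onI)
  fix x y assume xy: "x \<in> Lab" "y \<in> Lab" "dn x = dn y"
  then have "Atom x \<in> dn y" "Atom y \<in> dn x" using Atom_dn by auto
  then have "x \<sqsubseteq> y" "y \<sqsubseteq> x" unfolding dn_def by auto
  then show "x = y" using le_antisym xy Lab_carrier by blast
qed

lemma dn_one: "dn (one C) = W"
  unfolding dn_def using le_one by auto

lemma dn_meet:
  assumes "x \<in> A" "y \<in> A"
  shows "dn (meet C x y) = dn x \<inter> dn y"
proof (intro set_eqI iffI)
  fix w assume "w \<in> dn (meet C x y)"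
  then have "w \<in> W" "val w \<sqsubseteq> meet C x y" unfolding dn_def by auto
  then show "w \<in> dn x \<inter> dn y"
    using le_trans[OF _ _ _ _ meet_lower1, of "val w" x y] le_trans[OF _ _ _ _ meet_lower2, of "val w" x y]
      assms unfolding dn_def by simp
next
  fix w assume "w \<in> dn x \<inter> dn y"
  then show "w \<in> dn (meet C x y)" using meet_greatest assms unfolding dn_def by simp
qed

lemma dn_join:
  assumes xy: "x \<in> Lab" "y \<in> Lab" and j: "join C x y \<in> B"
  shows "dn (join C x y) = \<gamma> (dn x \<union> dn y)"
proof
  have A: "x \<in> A" "y \<in> A" using xy Lab_carrier by auto
  have "dn x \<union> dn y \<subseteq> dn (join C x y)"
    unfolding dn_def using A join_upper1 join_upper2 le_trans[of _ _ "join C x y"] by auto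
  then show "\<gamma> (dn x \<union> dn y) \<subseteq> dn (join C x y)" using \<gamma>_least dn_Closed[OF j] by blast
  show "dn (join C x y) \<subseteq> \<gamma> (dn x \<union> dn y)"
  proof
    fix w assume w: "w \<in> dn (join C x y)"
    then have wW: "w \<in> W" and wj: "val w \<sqsubseteq> join C x y" unfolding dn_def by auto
    show "w \<in> \<gamma> (dn x \<union> dn y)" unfolding \<gamma>_def
    proof (intro CollectI conjI ballI impI wW)
      fix c b assume cb: "c \<in> Ctx" "b \<in> B" "dn x \<union> dn y \<subseteq> basic c b"
      have bA: "b \<in> A" using cb B_carrier by blast
      have "eval C x c \<sqsubseteq> b" "eval C y c \<sqsubseteq> b"
        using cb(3) Atom_dn[OF xy(1)] Atom_dn[OF xy(2)] unfolding basic_def by auto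
      then have "eval C (join C x y) c \<sqsubseteq> b" using eval_Ctx_join[OF cb(1) A bA] by blast
      moreover have "eval C (val w) c \<sqsubseteq> eval C (join C x y) c"
        using eval_Ctx_mono[OF cb(1)] wW wj A by simp
      ultimately have "eval C (val w) c \<sqsubseteq> b"
        using le_trans cb(1) wW A bA by (meson eval_Ctx_closed ops_closed(2) val_closed)
      then show "w \<in> basic c b" unfolding basic_def using wW by blast
    qed
  qed
qed

lemma dn_mult:
  assumes xy: "x \<in> Lab" "y \<in> Lab" and m: "mult C x y \<in> B"
  shows "dn (mult C x y) = \<gamma> (dn x \<odot> dn y)"
proof
  have A: "x \<in> A" "y \<in> A" using xy Lab_carrier by auto
  have "dn x \<odot> dn y \<subseteq> dn (mult C x y)"
    unfolding dn_def using A mult_mono by auto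
  then show "\<gamma> (dn x \<odot> dn y) \<subseteq> dn (mult C x y)" using \<gamma>_least dn_Closed[OF m] by blast
  show "dn (mult C x y) \<subseteq> \<gamma> (dn x \<odot> dn y)"
  proof
    fix w assume "w \<in> dn (mult C x y)"
    then show "w \<in> \<gamma> (dn x \<odot> dn y)"
      using in_\<gamma>_if_below[OF mul_set_W[OF dn_W dn_W], of w "Mul (Atom x) (Atom y)"] Atom_dn xy
      unfolding dn_def by simp
  qed
qed

lemma dn_ldiv:
  assumes x: "x \<in> Lab" and y: "y \<in> A"
  shows "dn (ldiv C x y) = {w \<in> W. \<forall>z\<in>dn x. Mul z w \<in> dn y}"
proof (intro set_eqI iffI)
  have xA: "x \<in> A" using x Lab_carrier by blast
  fix w
  assume "w \<in> dn (ldiv C x y)"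
  then have wW: "w \<in> W" and le: "mult C x (val w) \<sqsubseteq> y"
    using residuation_left xA y unfolding dn_def by auto
  have "Mul z w \<in> dn y" if "z \<in> dn x" for z
  proof -
    have z: "z \<in> W" "val z \<sqsubseteq> x" using that unfolding dn_def by auto
    then have "mult C (val z) (val w) \<sqsubseteq> mult C x (val w)" using wW xA mult_mono_left by simp
    then have "mult C (val z) (val w) \<sqsubseteq> y" using le_trans[OF _ _ _ _ le] z wW xA y by simp
    then show ?thesis unfolding dn_def using z wW by simp
  qed
  then show "w \<in> {w \<in> W. \<forall>z\<in>dn x. Mul z w \<in> dn y}" using wW by blast
next
  have xA: "x \<in> A" using x Lab_carrier by blast
  fix w
  assume w: "w \<in> {w \<in> W. \<forall>z\<in>dn x. Mul z w \<in> dn y}"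
  then have "Mul (Atom x) w \<in> dn y" using Atom_dn[OF x] by blast
  then show "w \<in> dn (ldiv C x y)" using w residuation_left xA y unfolding dn_def by auto
qed

lemma dn_rdiv:
  assumes x: "x \<in> A" and y: "y \<in> Lab"
  shows "dn (rdiv C x y) = {w \<in> W. \<forall>z\<in>dn y. Mul w z \<in> dn x}"
proof (intro set_eqI iffI)
  have yA: "y \<in> A" using y Lab_carrier by blast
  fix w
  assume "w \<in> dn (rdiv C x y)"
  then have wW: "w \<in> W" and le: "mult C (val w) y \<sqsubseteq> x"
    using residuation_right yA x unfolding dn_def by auto
  have "Mul w z \<in> dn x" if "z \<in> dn y" for z
  proof -
    have z: "z \<in> W" "val z \<sqsubseteq> y" using that unfolding dn_def by auto
    then have "mult C (val w) (val z) \<sqsubseteq> mult C (val w) y" using wW yA mult_mono_right by simp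
    then have "mult C (val w) (val z) \<sqsubseteq> x" using le_trans[OF _ _ _ _ le] z wW yA x by simp
    then show ?thesis unfolding dn_def using z wW by simp
  qed
  then show "w \<in> {w \<in> W. \<forall>z\<in>dn y. Mul w z \<in> dn x}" using wW by blast
next
  have yA: "y \<in> A" using y Lab_carrier by blast
  fix w
  assume w: "w \<in> {w \<in> W. \<forall>z\<in>dn y. Mul w z \<in> dn x}"
  then have "Mul w (Atom y) \<in> dn x" using Atom_dn[OF y] by blast
  then show "w \<in> dn (rdiv C x y)" using w residuation_right yA x unfolding dn_def by auto
qed

lemma dn_bang:
  assumes x: "x \<in> Lab" and bx: "bang C x \<in> B"
  shows "dn (bang C x) = \<gamma> (Bang ` dn x)"
proof
  have xA: "x \<in> A" using x Lab_carrier by blast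
  have "Bang ` dn x \<subseteq> dn (bang C x)"
    unfolding dn_def using xA bang_mono by auto
  then show "\<gamma> (Bang ` dn x) \<subseteq> dn (bang C x)" using \<gamma>_least dn_Closed[OF bx] by blast
  show "dn (bang C x) \<subseteq> \<gamma> (Bang ` dn x)"
  proof
    fix w assume "w \<in> dn (bang C x)"
    then show "w \<in> \<gamma> (Bang ` dn x)"
      using in_\<gamma>_if_below[OF Bang_image_W[OF dn_W], of w "Bang (Atom x)"] Atom_dn[OF x]
      unfolding dn_def by simp
  qed
qed

lemma partial_embedding_dn: "partial_embedding C B dn frame_alg"
proof -
  have B: "B \<subseteq> Lab" "B \<subseteq> A" unfolding Lab_def using B_carrier by auto
  show ?thesis
    unfolding partial_embedding_def frame_alg_simps
    using inj_on_subset[OF inj_on_dn B(1)] dn_Closed dn_one dn_bang dn_meet dn_join dn_mult dn_ldiv dn_rdiv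
      B by (auto simp: subset_iff)
qed

lemma in_V_frame_alg: "\<forall>e\<in>E. satisfies C e \<Longrightarrow> in_V E frame_alg"
  unfolding in_V_def
  using interior_rlu_groupoid_frame_alg integral_frame_alg satisfies_frame_alg by blast

end

text \<open>The algebra of closed sets lives on sets of terms, the theorem asks for carrier \<open>nat\<close>.\<close>

definition copy_alg :: "('x \<Rightarrow> 'y) \<Rightarrow> ('x, 'c) irlu_scheme \<Rightarrow> 'y irlu" where
  "copy_alg f S = \<lparr>carrier = f ` carrier S,
     meet = (\<lambda>m n. f (meet S (inv_into (carrier S) f m) (inv_into (carrier S) f n))),
     join = (\<lambda>m n. f (join S (inv_into (carrier S) f m) (inv_into (carrier S) f n))),
     mult = (\<lambda>m n. f (mult S (inv_into (carrier S) f m) (inv_into (carrier S) f n))),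
     ldiv = (\<lambda>m n. f (ldiv S (inv_into (carrier S) f m) (inv_into (carrier S) f n))),
     rdiv = (\<lambda>m n. f (rdiv S (inv_into (carrier S) f m) (inv_into (carrier S) f n))),
     one = f (one S), bang = (\<lambda>m. f (bang S (inv_into (carrier S) f m)))\<rparr>"

context
  fixes f :: "'x \<Rightarrow> 'y" and S :: "('x, 'c) irlu_scheme"
  assumes inj: "inj_on f (carrier S)" and closed: "closed_ops S"
begin

lemma carrier_copy_alg: "carrier (copy_alg f S) = f ` carrier S"
  and one_copy_alg: "one (copy_alg f S) = f (one S)"
  unfolding copy_alg_def by simp_all

lemma bang_copy_alg: "x \<in> carrier S \<Longrightarrow> bang (copy_alg f S) (f x) = f (bang S x)"
  unfolding copy_alg_def using inj by simp

lemma copy_alg_simps: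
  assumes "x \<in> carrier S" "y \<in> carrier S"
  shows "meet (copy_alg f S) (f x) (f y) = f (meet S x y)" "join (copy_alg f S) (f x) (f y) = f (join S x y)"
    "mult (copy_alg f S) (f x) (f y) = f (mult S x y)" "ldiv (copy_alg f S) (f x) (f y) = f (ldiv S x y)"
    "rdiv (copy_alg f S) (f x) (f y) = f (rdiv S x y)"
  unfolding copy_alg_def using assms inj by simp_all

lemma leq_copy_alg:
  "x \<in> carrier S \<Longrightarrow> y \<in> carrier S \<Longrightarrow> leq (copy_alg f S) (f x) (f y) \<longleftrightarrow> leq S x y"
  unfolding leq_def using closed inj
  by (simp add: copy_alg_simps closed_ops_def inj_on_eq_iff)

lemmas copy_alg_transfer =
  carrier_copy_alg one_copy_alg bang_copy_alg copy_alg_simps leq_copy_alg inj_on_eq_iff[OF inj]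
  closed[unfolded closed_ops_def, THEN conjunct1]
  closed[unfolded closed_ops_def, THEN conjunct2, THEN conjunct1, rule_format]
  closed[unfolded closed_ops_def, THEN conjunct2, THEN conjunct2, rule_format]

lemma in_V_copy_alg_iff: "in_V E (copy_alg f S) \<longleftrightarrow> in_V E S"
proof -
  have "closed_ops (copy_alg f S)"
    using closed unfolding closed_ops_def by (simp add: copy_alg_transfer)
  moreover have "is_lattice (copy_alg f S) \<longleftrightarrow> is_lattice S"
    unfolding is_lattice_def by (simp add: copy_alg_transfer)
  moreover have "integral (copy_alg f S) \<longleftrightarrow> integral S"
    unfolding integral_def by (simp add: copy_alg_transfer)
  moreover have "satisfies (copy_alg f S) e \<longleftrightarrow> satisfies S e" for e
    by (cases e) (simp_all add: copy_alg_transfer)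
  ultimately show ?thesis
    using closed unfolding in_V_def interior_rlu_groupoid_def rlu_groupoid_def
    by (simp add: copy_alg_transfer)
qed

lemma partial_embedding_copy_alg:
  "partial_embedding C B h S \<Longrightarrow> partial_embedding C B (f \<circ> h) (copy_alg f S)"
  unfolding partial_embedding_def using inj
  by (auto simp: copy_alg_transfer comp_inj_on inj_on_subset image_subset_iff)

end

theorem mainTheorem4:
  fixes E :: "eqn set" and C :: "'a irlu" and B :: "'a set"
  assumes "in_V E C" and "B \<subseteq> carrier C" and "finite B"
  shows "\<exists>(D :: nat irlu) h. in_V E D \<and> finite (carrier D) \<and> partial_embedding C B h D"
proof -
  interpret fep_frame C B
    using assms unfolding in_V_def by unfold_locales auto
  have V: "in_V E frame_alg" using assms(1) in_V_frame_alg unfolding in_V_def by blast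
  obtain f :: "'a tm set \<Rightarrow> nat" where f: "inj_on f Closed"
    using finite_imp_inj_to_nat_seg[OF finite_Closed] by blast
  have copy: "inj_on f (carrier frame_alg)" "closed_ops frame_alg"
    using f closed_ops_frame_alg by simp_all
  have "in_V E (copy_alg f frame_alg)" using V in_V_copy_alg_iff[OF copy] by blast
  moreover have "finite (carrier (copy_alg f frame_alg))"
    using finite_Closed carrier_copy_alg[OF copy] by simp
  moreover have "partial_embedding C B (f \<circ> dn) (copy_alg f frame_alg)"
    using partial_embedding_copy_alg[OF copy partial_embedding_dn] .
  ultimately show ?thesis by blast
qed

end
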